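(* Let $\mathbb{F}$ be an infinite field with $\operatorname{char}(\mathbb{F})\neq 2$ and let $G$ be a non-abelian group with a group involution $\ast$ and a non-trivial orientation $\sigma:G\to\{\pm1\}$ such that $gg^\ast\in N=\ker\sigma$ for all $g\in G$. Suppose $\mathbb{F}G$ is normal with respect to the oriented involution $\circledast$ and that $N$, with the restriction of $\ast$, is an SLC-group with unique non-identity commutator $s$. Then there exists $g_0\in G\setminus N$ such that $g_0\in C_G(N)$ and $g_0^\ast=sg_0$. Consequently, $g_0$ is central in $G$.
   Context: A group involution on $G$ is a map $\ast:G\to G$ with $(gh)^\ast=h^\ast g^\ast$ and $(g^\ast)^\ast=g$. An orientation is a group homomorphism $\sigma:G\to\{\pm1\}$. The oriented involution is $(\sum_g\alpha_g g)^\circledast=\sum_g\alpha_g\sigma(g)g^\ast$ on $\mathbb{F}G$. $\mathbb{F}G$ is normal if $\alpha\alpha^\circledast=\alpha^\circledast\alpha$ for all $\alpha\in\mathbb{F}G$. $C_G(N)$ is the centralizer of $N$ in $G$. $(g,h)=g^{-1}h^{-1}gh$. A group $H$ is an LC-group if it is non-abelian and for all $g,h\in H$: $gh=hg$ iff at least one of $g,h,gh$ is in $\zeta(H)$. $H$ with involution $\ast$ is an SLC-group if it is an LC-group with a unique non-identity commutator $s$ (i.e. $\{(g,h):g,h\in H\}=\{1,s\}$) and $h^\ast=h$ for $h\in\zeta(H)$, $h^\ast=sh$ for $h\notin\zeta(H)$. *)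

theory Defs
  imports "HOL-Algebra.Group"
begin

definition group_involution :: "('g, 'b) monoid_scheme \<Rightarrow> ('g \<Rightarrow> 'g) \<Rightarrow> bool" where
  "group_involution G st \<longleftrightarrow>
     (\<forall>g\<in>carrier G. st g \<in> carrier G) \<and>
     (\<forall>g\<in>carrier G. \<forall>h\<in>carrier G. st (g \<otimes>\<^bsub>G\<^esub> h) = st h \<otimes>\<^bsub>G\<^esub> st g) \<and>
     (\<forall>g\<in>carrier G. st (st g) = g)"

definition orientation :: "('g, 'b) monoid_scheme \<Rightarrow> ('g \<Rightarrow> int) \<Rightarrow> bool" where
  "orientation G \<sigma> \<longleftrightarrow>
     (\<forall>g\<in>carrier G. \<sigma> g \<in> {1, -1}) \<and>
     (\<forall>g\<in>carrier G. \<forall>h\<in>carrier G. \<sigma> (g \<otimes>\<^bsub>G\<^esub> h) = \<sigma> g * \<sigma> h)"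

definition orient_kernel :: "('g, 'b) monoid_scheme \<Rightarrow> ('g \<Rightarrow> int) \<Rightarrow> 'g set" where
  "orient_kernel G \<sigma> = {g \<in> carrier G. \<sigma> g = 1}"

text \<open>Elements of the group algebra FG: finitely supported functions on carrier G.\<close>
definition gr_elem :: "('g, 'b) monoid_scheme \<Rightarrow> ('g \<Rightarrow> 'f::field) \<Rightarrow> bool" where
  "gr_elem G a \<longleftrightarrow> (\<forall>x. x \<notin> carrier G \<longrightarrow> a x = 0) \<and> finite {x. a x \<noteq> 0}"

definition gr_mult :: "('g, 'b) monoid_scheme \<Rightarrow> ('g \<Rightarrow> 'f::field) \<Rightarrow> ('g \<Rightarrow> 'f) \<Rightarrow> 'g \<Rightarrow> 'f" where
  "gr_mult G a b x = (\<Sum>p\<in>{p \<in> {g. a g \<noteq> 0} \<times> {h. b h \<noteq> 0}. fst p \<otimes>\<^bsub>G\<^esub> snd p = x}.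
                         a (fst p) * b (snd p))"

text \<open>Oriented involution: (\<Sum> a_g g) \<mapsto> \<Sum> a_g \<sigma>(g) g*, i.e. coefficient at x is \<sigma>(x*) a(x*).\<close>
definition oriented_inv :: "('g, 'b) monoid_scheme \<Rightarrow> ('g \<Rightarrow> 'g) \<Rightarrow> ('g \<Rightarrow> int) \<Rightarrow> ('g \<Rightarrow> 'f::field) \<Rightarrow> 'g \<Rightarrow> 'f" where
  "oriented_inv G st \<sigma> a x = (if x \<in> carrier G then of_int (\<sigma> (st x)) * a (st x) else 0)"

definition gr_normal :: "('g, 'b) monoid_scheme \<Rightarrow> ('g \<Rightarrow> 'g) \<Rightarrow> ('g \<Rightarrow> int) \<Rightarrow> 'f::field itself \<Rightarrow> bool" where
  "gr_normal G st \<sigma> TYPE('f) \<longleftrightarrow>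
     (\<forall>a :: 'g \<Rightarrow> 'f. gr_elem G a \<longrightarrow>
        gr_mult G a (oriented_inv G st \<sigma> a) = gr_mult G (oriented_inv G st \<sigma> a) a)"

definition commutator :: "('g, 'b) monoid_scheme \<Rightarrow> 'g \<Rightarrow> 'g \<Rightarrow> 'g" where
  "commutator G g h = inv\<^bsub>G\<^esub> g \<otimes>\<^bsub>G\<^esub> inv\<^bsub>G\<^esub> h \<otimes>\<^bsub>G\<^esub> g \<otimes>\<^bsub>G\<^esub> h"

definition sub_center :: "('g, 'b) monoid_scheme \<Rightarrow> 'g set \<Rightarrow> 'g set" where
  "sub_center G H = {z \<in> H. \<forall>h\<in>H. z \<otimes>\<^bsub>G\<^esub> h = h \<otimes>\<^bsub>G\<^esub> z}"

definition LC_group :: "('g, 'b) monoid_scheme \<Rightarrow> 'g set \<Rightarrow> bool" where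
  "LC_group G H \<longleftrightarrow>
     (\<exists>g\<in>H. \<exists>h\<in>H. g \<otimes>\<^bsub>G\<^esub> h \<noteq> h \<otimes>\<^bsub>G\<^esub> g) \<and>
     (\<forall>g\<in>H. \<forall>h\<in>H. g \<otimes>\<^bsub>G\<^esub> h = h \<otimes>\<^bsub>G\<^esub> g \<longleftrightarrow>
        (g \<in> sub_center G H \<or> h \<in> sub_center G H \<or> g \<otimes>\<^bsub>G\<^esub> h \<in> sub_center G H))"

definition SLC_group :: "('g, 'b) monoid_scheme \<Rightarrow> 'g set \<Rightarrow> ('g \<Rightarrow> 'g) \<Rightarrow> 'g \<Rightarrow> bool" where
  "SLC_group G H st s \<longleftrightarrow>
     LC_group G H \<and> s \<noteq> \<one>\<^bsub>G\<^esub> \<and>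
     {commutator G g h | g h. g \<in> H \<and> h \<in> H} = {\<one>\<^bsub>G\<^esub>, s} \<and>
     (\<forall>h\<in>H. st h = (if h \<in> sub_center G H then h else s \<otimes>\<^bsub>G\<^esub> h))"

end

theory Submission
  imports Defs
begin

text \<open>Testing normality of \<open>\<F>G\<close> on \<open>x\<close> and on \<open>x + y\<close> shows \<open>x x\<^sup>* = x\<^sup>* x\<close> and, as
  \<open>char \<F> \<noteq> 2\<close>, an equality of two-element multisets of products of \<open>x, y, x\<^sup>*, y\<^sup>*\<close>.
  From these, an element outside \<open>N\<close> that does not centralize \<open>N\<close> is fixed by \<open>*\<close>.
  If no element outside \<open>N\<close> centralized \<open>N\<close>, every \<open>x \<notin> N\<close> would be fixed, so
  \<open>x n = s n x\<close> for all non-central \<open>n \<in> N\<close>; applied to \<open>a\<close>, \<open>b\<close> and \<open>ab\<close> with \<open>ab \<noteq> ba\<close>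
  this forces \<open>s = 1\<close>. For a centralizer \<open>g\<^sub>0\<close>, the element \<open>g\<^sub>0 a\<close> is fixed by \<open>*\<close>,
  which gives \<open>g\<^sub>0\<^sup>* = s g\<^sub>0\<close>; and \<open>g\<^sub>0\<close> is central because \<open>N\<close> has index two.\<close>

lemma gr_mult_expand:
  assumes "finite A" "finite B" "{g. a g \<noteq> 0} \<subseteq> A" "{h. b h \<noteq> 0} \<subseteq> B"
  shows "gr_mult G a b z = (\<Sum>g\<in>A. \<Sum>h\<in>B. if g \<otimes>\<^bsub>G\<^esub> h = z then a g * b h else 0)"
proof -
  let ?S = "{g. a g \<noteq> 0} \<times> {h. b h \<noteq> 0}"
  have fS: "finite ?S" using assms by (meson finite_SigmaI finite_subset)
  have "gr_mult G a b z = (\<Sum>p\<in>?S. if fst p \<otimes>\<^bsub>G\<^esub> snd p = z then a (fst p) * b (snd p) else 0)"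
    unfolding gr_mult_def using sum.inter_filter[OF fS] by simp
  also have "\<dots> = (\<Sum>p\<in>A \<times> B. if fst p \<otimes>\<^bsub>G\<^esub> snd p = z then a (fst p) * b (snd p) else 0)"
    by (rule sum.mono_neutral_left) (use assms in auto)
  also have "\<dots> = (\<Sum>g\<in>A. \<Sum>h\<in>B. if g \<otimes>\<^bsub>G\<^esub> h = z then a g * b h else 0)"
    by (simp add: sum.cartesian_product case_prod_beta)
  finally show ?thesis .
qed

lemma group_involution_closed:
  "group_involution G st \<Longrightarrow> x \<in> carrier G \<Longrightarrow> st x \<in> carrier G"
  unfolding group_involution_def by auto

lemma group_involution_involutive:
  "group_involution G st \<Longrightarrow> x \<in> carrier G \<Longrightarrow> st (st x) = x"
  unfolding group_involution_def by auto

lemma group_involution_mult: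
  "group_involution G st \<Longrightarrow> x \<in> carrier G \<Longrightarrow> y \<in> carrier G \<Longrightarrow>
   st (x \<otimes>\<^bsub>G\<^esub> y) = st y \<otimes>\<^bsub>G\<^esub> st x"
  unfolding group_involution_def by auto

lemma group_involution_inj_on: "group_involution G st \<Longrightarrow> inj_on st (carrier G)"
  by (metis group_involution_involutive inj_onI)

text \<open>Normality tested on the sum of the group elements in a finite set \<open>A\<close>, read off
  coefficientwise at \<open>z\<close>.\<close>
lemma gr_normal_sum_identity:
  fixes G :: "('g, 'b) monoid_scheme" and A :: "'g set"
  assumes invol: "group_involution G st" and normal: "gr_normal G st \<sigma> TYPE('f::field)"
    and A: "finite A" "A \<subseteq> carrier G"
  shows "(\<Sum>g\<in>A. \<Sum>a\<in>A. if g \<otimes>\<^bsub>G\<^esub> st a = z then (of_int (\<sigma> a) :: 'f) else 0)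
       = (\<Sum>a\<in>A. \<Sum>g\<in>A. if st a \<otimes>\<^bsub>G\<^esub> g = z then of_int (\<sigma> a) else 0)"
proof -
  define \<alpha> :: "'g \<Rightarrow> 'f" where "\<alpha> w = (if w \<in> A then 1 else 0)" for w
  define \<beta> :: "'g \<Rightarrow> 'f" where "\<beta> w = (if w \<in> st ` A then of_int (\<sigma> (st w)) else 0)" for w
  have inj: "inj_on st A"
    using inj_on_subset[OF group_involution_inj_on[OF invol] A(2)] .
  have starA: "st ` A \<subseteq> carrier G"
    using A(2) group_involution_closed[OF invol] by auto
  have st_in_iff: "st w \<in> A \<longleftrightarrow> w \<in> st ` A" if "w \<in> carrier G" for w
    using that A(2) group_involution_involutive[OF invol]
    by (metis (no_types, lifting) image_iff subsetD)
  have "gr_elem G \<alpha>"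
    using A unfolding gr_elem_def \<alpha>_def by (auto intro: finite_subset)
  moreover have "oriented_inv G st \<sigma> \<alpha> = \<beta>"
    using starA st_in_iff by (auto simp: oriented_inv_def \<alpha>_def \<beta>_def fun_eq_iff)
  ultimately have eq: "gr_mult G \<alpha> \<beta> z = gr_mult G \<beta> \<alpha> z"
    using normal unfolding gr_normal_def by metis
  have \<beta>_star: "\<beta> (st a) = of_int (\<sigma> a)" if "a \<in> A" for a
    using that A(2) group_involution_involutive[OF invol] by (auto simp: \<beta>_def)
  have "gr_mult G \<alpha> \<beta> z = (\<Sum>g\<in>A. \<Sum>h\<in>st ` A. if g \<otimes>\<^bsub>G\<^esub> h = z then \<alpha> g * \<beta> h else 0)"
    by (rule gr_mult_expand) (auto simp: \<alpha>_def \<beta>_def A split: if_splits)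
  also have "\<dots> = (\<Sum>g\<in>A. \<Sum>a\<in>A. if g \<otimes>\<^bsub>G\<^esub> st a = z then of_int (\<sigma> a) else 0)"
    by (auto simp: sum.reindex[OF inj] \<alpha>_def \<beta>_star intro!: sum.cong)
  finally have lhs: "gr_mult G \<alpha> \<beta> z = \<dots>" .
  have "gr_mult G \<beta> \<alpha> z = (\<Sum>h\<in>st ` A. \<Sum>g\<in>A. if h \<otimes>\<^bsub>G\<^esub> g = z then \<beta> h * \<alpha> g else 0)"
    by (rule gr_mult_expand) (auto simp: \<alpha>_def \<beta>_def A split: if_splits)
  also have "\<dots> = (\<Sum>a\<in>A. \<Sum>g\<in>A. if st a \<otimes>\<^bsub>G\<^esub> g = z then of_int (\<sigma> a) else 0)"
    by (auto simp: sum.reindex[OF inj] \<alpha>_def \<beta>_star intro!: sum.cong)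
  finally show ?thesis using eq lhs by simp
qed

lemma gr_normal_star_commute:
  fixes G :: "('g, 'b) monoid_scheme"
  assumes invol: "group_involution G st" and normal: "gr_normal G st \<sigma> TYPE('f::field)"
    and orient: "orientation G \<sigma>" and x: "x \<in> carrier G"
  shows "x \<otimes>\<^bsub>G\<^esub> st x = st x \<otimes>\<^bsub>G\<^esub> x"
proof -
  have "(if x \<otimes>\<^bsub>G\<^esub> st x = z then (of_int (\<sigma> x) :: 'f) else 0)
      = (if st x \<otimes>\<^bsub>G\<^esub> x = z then of_int (\<sigma> x) else 0)" for z
    using gr_normal_sum_identity[OF invol normal, of "{x}" z] x by simp
  from this[of "x \<otimes>\<^bsub>G\<^esub> st x"] show ?thesis
    using orient x unfolding orientation_def by (auto split: if_splits)
qed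

lemma gr_normal_pair_identity:
  fixes G :: "('g, 'b) monoid_scheme"
  assumes invol: "group_involution G st" and normal: "gr_normal G st \<sigma> TYPE('f::field)"
    and orient: "orientation G \<sigma>" and x: "x \<in> carrier G" and y: "y \<in> carrier G"
    and "x \<noteq> y"
  shows "(if x \<otimes>\<^bsub>G\<^esub> st y = z then (of_int (\<sigma> y) :: 'f) else 0)
       + (if y \<otimes>\<^bsub>G\<^esub> st x = z then of_int (\<sigma> x) else 0)
       = (if st x \<otimes>\<^bsub>G\<^esub> y = z then of_int (\<sigma> x) else 0)
       + (if st y \<otimes>\<^bsub>G\<^esub> x = z then of_int (\<sigma> y) else 0)"
proof -
  have "x \<otimes>\<^bsub>G\<^esub> st x = st x \<otimes>\<^bsub>G\<^esub> x" "y \<otimes>\<^bsub>G\<^esub> st y = st y \<otimes>\<^bsub>G\<^esub> y"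
    using gr_normal_star_commute[OF invol normal orient] x y by auto
  with gr_normal_sum_identity[OF invol normal, of "{x, y}" z] x y \<open>x \<noteq> y\<close> show ?thesis
    by (simp add: algebra_simps)
qed

lemma delta_pair_eq_cases:
  assumes "(2::'f::field) \<noteq> 0"
    and "\<And>z. (if p = z then (1::'f) else 0) + (if q = z then 1 else 0)
            = (if r = z then 1 else 0) + (if t = z then 1 else 0)"
  shows "(p = r \<and> q = t) \<or> (p = t \<and> q = r)"
  using assms(2)[of p] assms(2)[of q] assms(1) by (auto split: if_splits)

lemma gr_normal_pair_same_sign:
  fixes G :: "('g, 'b) monoid_scheme"
  assumes char: "(2::'f::field) \<noteq> 0"
    and invol: "group_involution G st" and normal: "gr_normal G st \<sigma> TYPE('f)"
    and orient: "orientation G \<sigma>"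
    and x: "x \<in> carrier G" and y: "y \<in> carrier G" and "x \<noteq> y" and sign: "\<sigma> y = \<sigma> x"
  shows "(x \<otimes>\<^bsub>G\<^esub> st y = st x \<otimes>\<^bsub>G\<^esub> y \<and> y \<otimes>\<^bsub>G\<^esub> st x = st y \<otimes>\<^bsub>G\<^esub> x) \<or>
         (x \<otimes>\<^bsub>G\<^esub> st y = st y \<otimes>\<^bsub>G\<^esub> x \<and> y \<otimes>\<^bsub>G\<^esub> st x = st x \<otimes>\<^bsub>G\<^esub> y)"
proof (rule delta_pair_eq_cases[OF char])
  fix z
  show "(if x \<otimes>\<^bsub>G\<^esub> st y = z then (1::'f) else 0) + (if y \<otimes>\<^bsub>G\<^esub> st x = z then 1 else 0)
      = (if st x \<otimes>\<^bsub>G\<^esub> y = z then 1 else 0) + (if st y \<otimes>\<^bsub>G\<^esub> x = z then 1 else 0)"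
    using gr_normal_pair_identity[OF invol normal orient x y \<open>x \<noteq> y\<close>, of z] sign
      orient x unfolding orientation_def by (auto split: if_splits)
qed

lemma gr_normal_pair_opposite_sign:
  fixes G :: "('g, 'b) monoid_scheme"
  assumes char: "(2::'f::field) \<noteq> 0"
    and invol: "group_involution G st" and normal: "gr_normal G st \<sigma> TYPE('f)"
    and orient: "orientation G \<sigma>"
    and x: "x \<in> carrier G" and y: "y \<in> carrier G" and sign: "\<sigma> x = -1" "\<sigma> y = 1"
  shows "(x \<otimes>\<^bsub>G\<^esub> st y = st y \<otimes>\<^bsub>G\<^esub> x \<and> st x \<otimes>\<^bsub>G\<^esub> y = y \<otimes>\<^bsub>G\<^esub> st x) \<or>
         (x \<otimes>\<^bsub>G\<^esub> st y = y \<otimes>\<^bsub>G\<^esub> st x \<and> st x \<otimes>\<^bsub>G\<^esub> y = st y \<otimes>\<^bsub>G\<^esub> x)"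
proof (rule delta_pair_eq_cases[OF char])
  fix z
  have "x \<noteq> y" using sign by auto
  then show "(if x \<otimes>\<^bsub>G\<^esub> st y = z then (1::'f) else 0) + (if st x \<otimes>\<^bsub>G\<^esub> y = z then 1 else 0)
      = (if st y \<otimes>\<^bsub>G\<^esub> x = z then 1 else 0) + (if y \<otimes>\<^bsub>G\<^esub> st x = z then 1 else 0)"
    using gr_normal_pair_identity[OF invol normal orient x y, of z] sign
    by (auto split: if_splits)
qed

lemma (in group) mult_inv_cancel_left:
  "x \<in> carrier G \<Longrightarrow> y \<in> carrier G \<Longrightarrow> x \<otimes> (inv x \<otimes> y) = y"
  by (simp add: m_assoc[symmetric])

lemma (in group) inv_mult_cancel_left:
  "x \<in> carrier G \<Longrightarrow> y \<in> carrier G \<Longrightarrow> inv x \<otimes> (x \<otimes> y) = y"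
  by (simp add: m_assoc[symmetric])

lemma (in group) commutator_inv:
  "a \<in> carrier G \<Longrightarrow> b \<in> carrier G \<Longrightarrow> inv (commutator G a b) = commutator G b a"
  by (simp add: commutator_def m_assoc inv_mult_group)

lemma (in group) commutator_conj:
  "a \<in> carrier G \<Longrightarrow> b \<in> carrier G \<Longrightarrow> n \<in> carrier G \<Longrightarrow>
   inv n \<otimes> commutator G a b \<otimes> n = commutator G (inv n \<otimes> a \<otimes> n) (inv n \<otimes> b \<otimes> n)"
  by (simp add: commutator_def m_assoc inv_mult_group mult_inv_cancel_left inv_mult_cancel_left)

lemma (in group) SLC_group_commutator_central:
  assumes H: "subgroup H G" and slc: "SLC_group G H st s"
  shows "s \<in> sub_center G H"
proof -
  interpret H: subgroup H G by (rule H)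
  have comms: "{commutator G g h | g h. g \<in> H \<and> h \<in> H} = {\<one>, s}" and "s \<noteq> \<one>"
    using slc unfolding SLC_group_def by auto
  then obtain a b where ab: "a \<in> H" "b \<in> H" "s = commutator G a b" by blast
  have "s \<in> H" using ab by (simp add: commutator_def)
  moreover have "s \<otimes> n = n \<otimes> s" if n: "n \<in> H" for n
  proof -
    have "inv n \<otimes> s \<otimes> n = commutator G (inv n \<otimes> a \<otimes> n) (inv n \<otimes> b \<otimes> n)"
      using commutator_conj ab n by simp
    then have "inv n \<otimes> s \<otimes> n \<in> {\<one>, s}" using comms ab n by blast
    moreover have "inv n \<otimes> s \<otimes> n = y \<longleftrightarrow> s \<otimes> n = n \<otimes> y" if "y \<in> carrier G" for y
      using n \<open>s \<in> H\<close> that by (metis H.mem_carrier inv_solve_left' m_assoc m_closed inv_closed)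
    ultimately show ?thesis
      using \<open>s \<noteq> \<one>\<close> \<open>s \<in> H\<close> n by auto
  qed
  ultimately show ?thesis unfolding sub_center_def by blast
qed

lemma (in group) SLC_group_commutator_square:
  assumes H: "subgroup H G" and slc: "SLC_group G H st s"
  shows "s \<otimes> s = \<one>"
proof -
  interpret H: subgroup H G by (rule H)
  have comms: "{commutator G g h | g h. g \<in> H \<and> h \<in> H} = {\<one>, s}" and "s \<noteq> \<one>"
    using slc unfolding SLC_group_def by auto
  then obtain a b where ab: "a \<in> H" "b \<in> H" "s = commutator G a b" by blast
  have s: "s \<in> carrier G" using ab by (simp add: commutator_def)
  have "inv s = commutator G b a" using commutator_inv ab by simp
  then have "inv s \<in> {\<one>, s}" using comms ab by blast
  moreover have "inv s \<noteq> \<one>" using \<open>s \<noteq> \<one>\<close> s by (metis inv_inv inv_one)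
  ultimately show ?thesis using s by (metis insertE r_inv singletonD)
qed

text \<open>The last three assumptions are what normality of \<open>\<F>G\<close> with respect to the oriented
  involution says about sums of one or two group elements when \<open>char \<F> \<noteq> 2\<close>.\<close>
locale normal_slc_orientation = group G for G (structure) +
  fixes st :: "'a \<Rightarrow> 'a" and \<sigma> :: "'a \<Rightarrow> int" and s :: 'a
  assumes invol: "group_involution G st"
    and orient: "orientation G \<sigma>"
    and mult_star_in_kernel: "g \<in> carrier G \<Longrightarrow> g \<otimes> st g \<in> orient_kernel G \<sigma>"
    and slc: "SLC_group G (orient_kernel G \<sigma>) st s"
    and star_commute: "x \<in> carrier G \<Longrightarrow> x \<otimes> st x = st x \<otimes> x"
    and pair_same_sign: "\<lbrakk>x \<in> carrier G; y \<in> carrier G; x \<noteq> y; \<sigma> y = \<sigma> x\<rbrakk> \<Longrightarrow>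
      (x \<otimes> st y = st x \<otimes> y \<and> y \<otimes> st x = st y \<otimes> x) \<or>
      (x \<otimes> st y = st y \<otimes> x \<and> y \<otimes> st x = st x \<otimes> y)"
    and pair_opposite_sign: "\<lbrakk>x \<in> carrier G; y \<in> carrier G; \<sigma> x = -1; \<sigma> y = 1\<rbrakk> \<Longrightarrow>
      (x \<otimes> st y = st y \<otimes> x \<and> st x \<otimes> y = y \<otimes> st x) \<or>
      (x \<otimes> st y = y \<otimes> st x \<and> st x \<otimes> y = st y \<otimes> x)"
begin

abbreviation N where "N \<equiv> orient_kernel G \<sigma>"

abbreviation Z where "Z \<equiv> sub_center G N"

lemma star_closed [simp]: "x \<in> carrier G \<Longrightarrow> st x \<in> carrier G"
  using group_involution_closed[OF invol] .

lemma star_mult: "x \<in> carrier G \<Longrightarrow> y \<in> carrier G \<Longrightarrow> st (x \<otimes> y) = st y \<otimes> st x"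
  using group_involution_mult[OF invol] .

lemma kernel_iff: "n \<in> N \<longleftrightarrow> n \<in> carrier G \<and> \<sigma> n = 1"
  unfolding orient_kernel_def by auto

lemma center_iff: "z \<in> Z \<longleftrightarrow> z \<in> N \<and> (\<forall>h\<in>N. z \<otimes> h = h \<otimes> z)"
  unfolding sub_center_def by auto

lemma sigma_mult: "x \<in> carrier G \<Longrightarrow> y \<in> carrier G \<Longrightarrow> \<sigma> (x \<otimes> y) = \<sigma> x * \<sigma> y"
  using orient unfolding orientation_def by auto

lemma sigma_values: "x \<in> carrier G \<Longrightarrow> \<sigma> x = 1 \<or> \<sigma> x = -1"
  using orient unfolding orientation_def by auto

lemma sigma_outside_kernel: "x \<in> carrier G \<Longrightarrow> x \<notin> N \<Longrightarrow> \<sigma> x = -1"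
  using sigma_values kernel_iff by blast

lemma sigma_inv: "x \<in> carrier G \<Longrightarrow> \<sigma> (inv x) = \<sigma> x"
  using sigma_mult[of x "inv x"] sigma_mult[of \<one> \<one>] sigma_values[of x] sigma_values[of \<one>]
  by (cases "\<sigma> \<one> = 1") auto

lemma kernel_subgroup: "subgroup N G"
proof (rule subgroupI)
  have "\<sigma> \<one> = 1" using sigma_mult[of \<one> \<one>] sigma_values[of \<one>] by auto
  then show "N \<noteq> {}" using kernel_iff by blast
qed (auto simp: kernel_iff sigma_mult sigma_inv)

lemma star_on_kernel: "h \<in> N \<Longrightarrow> st h = (if h \<in> Z then h else s \<otimes> h)"
  using slc unfolding SLC_group_def by blast

lemma commutator_central: "s \<in> Z"
  using SLC_group_commutator_central[OF kernel_subgroup slc] .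

lemma commutator_square: "s \<otimes> s = \<one>"
  using SLC_group_commutator_square[OF kernel_subgroup slc] .

lemma commutator_ne_one: "s \<noteq> \<one>"
  using slc unfolding SLC_group_def by blast

lemma commutator_closed [simp]: "s \<in> carrier G"
  using commutator_central kernel_iff center_iff by blast

lemma noncommuting_kernel_pair:
  obtains a b where "a \<in> N" "b \<in> N" "a \<notin> Z" "b \<notin> Z" "a \<otimes> b \<notin> Z" "a \<otimes> b \<noteq> b \<otimes> a"
  using slc unfolding SLC_group_def LC_group_def by blast

text \<open>The star of \<open>x x\<^sup>*\<close> is itself, whereas the star of a non-central element of \<open>N\<close>
  is shifted by \<open>s \<noteq> 1\<close>.\<close>
lemma mult_star_in_center: "x \<in> carrier G \<Longrightarrow> x \<otimes> st x \<in> Z"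
  using star_on_kernel[OF mult_star_in_kernel] star_mult[of x "st x"] commutator_ne_one
    group_involution_involutive[OF invol, of x]
  by (metis r_cancel_one' commutator_closed m_closed star_closed)

lemma noncommuting_twisted:
  assumes Y: "Y \<in> carrier G" "Y \<notin> N" and m: "m \<in> N" and nc: "Y \<otimes> m \<noteq> m \<otimes> Y"
  shows "Y \<otimes> m = st m \<otimes> Y"
proof -
  have mc: "m \<in> carrier G" using m kernel_iff by blast
  have "Y \<noteq> Y \<otimes> m" using nc Y mc by auto
  moreover have "\<sigma> (Y \<otimes> m) = \<sigma> Y" using m Y mc by (simp add: kernel_iff sigma_mult)
  ultimately consider
      "(Y \<otimes> m) \<otimes> st Y = st (Y \<otimes> m) \<otimes> Y"
    | "(Y \<otimes> m) \<otimes> st Y = st Y \<otimes> (Y \<otimes> m)"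
    using pair_same_sign[of Y "Y \<otimes> m"] Y mc by auto
  then show ?thesis
  proof cases
    case 1
    then have "(Y \<otimes> m) \<otimes> st Y = st m \<otimes> (st Y \<otimes> Y)"
      using Y mc by (simp add: star_mult m_assoc)
    also have "\<dots> = (st m \<otimes> Y) \<otimes> st Y"
      using Y mc by (simp add: star_commute m_assoc)
    finally show ?thesis using Y mc by simp
  next
    case 2
    then have "(Y \<otimes> m) \<otimes> st Y = (Y \<otimes> st Y) \<otimes> m"
      using Y mc by (simp add: star_commute m_assoc)
    also have "\<dots> = m \<otimes> (Y \<otimes> st Y)"
      using mult_star_in_center[OF Y(1)] m center_iff by blast
    also have "\<dots> = (m \<otimes> Y) \<otimes> st Y"
      using Y mc by (simp add: m_assoc)
    finally show ?thesis using nc Y mc by simp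
  qed
qed

lemma star_fixed_if_not_centralizing:
  assumes Y: "Y \<in> carrier G" "Y \<notin> N" and m: "m \<in> N" and nc: "Y \<otimes> m \<noteq> m \<otimes> Y"
  shows "st Y = Y"
proof -
  have mc: "m \<in> carrier G" using m kernel_iff by blast
  have twisted: "Y \<otimes> m = st m \<otimes> Y"
    using noncommuting_twisted[OF Y m nc] .
  then have "m \<notin> Z" using star_on_kernel[OF m] nc by auto
  then have "st m \<noteq> m"
    using star_on_kernel[OF m] commutator_ne_one mc by simp
  from pair_opposite_sign[OF Y(1) mc sigma_outside_kernel[OF Y] conjunct2[OF m[unfolded kernel_iff]]]
  show ?thesis
  proof
    assume "Y \<otimes> st m = st m \<otimes> Y \<and> st Y \<otimes> m = m \<otimes> st Y"
    then have "Y \<otimes> st m = Y \<otimes> m" using twisted by simp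
    with \<open>st m \<noteq> m\<close> show ?thesis using Y mc by simp
  next
    assume "Y \<otimes> st m = m \<otimes> st Y \<and> st Y \<otimes> m = st m \<otimes> Y"
    then have "st Y \<otimes> m = Y \<otimes> m" using twisted by simp
    then show ?thesis using Y mc by simp
  qed
qed

lemma exists_centralizer_outside_kernel:
  assumes "\<exists>g\<in>carrier G. \<sigma> g \<noteq> 1"
  shows "\<exists>g0 \<in> carrier G - N. \<forall>n\<in>N. g0 \<otimes> n = n \<otimes> g0"
proof (rule ccontr)
  assume "\<not> ?thesis"
  then have fixed: "st y = y" if "y \<in> carrier G" "y \<notin> N" for y
    using star_fixed_if_not_centralizing that by blast
  obtain x where x: "x \<in> carrier G" "x \<notin> N" using assms kernel_iff by blast
  have twisted: "x \<otimes> n = s \<otimes> (n \<otimes> x)" if n: "n \<in> N" "n \<notin> Z" for n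
  proof -
    have nc: "n \<in> carrier G" using n kernel_iff by blast
    have "x \<otimes> n \<notin> N" using x n nc by (simp add: kernel_iff sigma_mult sigma_outside_kernel)
    then have "x \<otimes> n = st (x \<otimes> n)" using fixed x nc by simp
    also have "\<dots> = s \<otimes> (n \<otimes> x)"
      using x nc n star_on_kernel[OF n(1)] fixed[OF x] by (simp add: star_mult m_assoc)
    finally show ?thesis .
  qed
  obtain a b where ab: "a \<in> N" "b \<in> N" "a \<notin> Z" "b \<notin> Z" "a \<otimes> b \<notin> Z"
    by (rule noncommuting_kernel_pair)
  have a: "a \<in> carrier G" and b: "b \<in> carrier G" using ab kernel_iff by auto
  have s_comm: "s \<otimes> a = a \<otimes> s" using commutator_central ab center_iff by blast
  have "s \<otimes> (a \<otimes> b \<otimes> x) = x \<otimes> (a \<otimes> b)"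
    using twisted ab kernel_subgroup by (simp add: subgroup.m_closed)
  also have "\<dots> = (x \<otimes> a) \<otimes> b"
    using a b x by (simp add: m_assoc)
  also have "\<dots> = s \<otimes> (a \<otimes> (x \<otimes> b))"
    using twisted[OF ab(1,3)] a b x by (simp add: m_assoc)
  also have "\<dots> = s \<otimes> (a \<otimes> (s \<otimes> (b \<otimes> x)))"
    using twisted[OF ab(2,4)] by simp
  also have "\<dots> = s \<otimes> ((a \<otimes> s) \<otimes> (b \<otimes> x))"
    using a b x by (simp add: m_assoc)
  also have "\<dots> = (s \<otimes> s) \<otimes> (a \<otimes> b \<otimes> x)"
    unfolding s_comm[symmetric] using a b x by (simp add: m_assoc)
  finally have "s \<otimes> (a \<otimes> b \<otimes> x) = a \<otimes> b \<otimes> x"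
    using commutator_square a b x by simp
  then show False using commutator_ne_one a b x by simp
qed

lemma star_of_centralizer:
  assumes g0: "g0 \<in> carrier G" "g0 \<notin> N" and cent: "\<forall>n\<in>N. g0 \<otimes> n = n \<otimes> g0"
  shows "st g0 = s \<otimes> g0"
proof -
  obtain a b where ab: "a \<in> N" "b \<in> N" "a \<notin> Z" "a \<otimes> b \<noteq> b \<otimes> a"
    by (rule noncommuting_kernel_pair)
  have a: "a \<in> carrier G" and b: "b \<in> carrier G" using ab kernel_iff by auto
  have "g0 \<otimes> a \<notin> N" using g0 ab a by (simp add: kernel_iff sigma_mult sigma_outside_kernel)
  moreover have "(g0 \<otimes> a) \<otimes> b \<noteq> b \<otimes> (g0 \<otimes> a)"
  proof -
    have "b \<otimes> (g0 \<otimes> a) = g0 \<otimes> (b \<otimes> a)"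
      using cent ab(2) g0 a b by (metis m_assoc)
    then show ?thesis using ab(4) g0 a b by (simp add: m_assoc)
  qed
  ultimately have "st (g0 \<otimes> a) = g0 \<otimes> a"
    using star_fixed_if_not_centralizing g0 a ab by simp
  moreover have "st (g0 \<otimes> a) = a \<otimes> (s \<otimes> st g0)"
  proof -
    have "s \<otimes> a = a \<otimes> s" using commutator_central ab(1) center_iff by blast
    then show ?thesis
      using star_on_kernel[OF ab(1)] ab(3) g0 a by (simp add: star_mult m_assoc)
  qed
  moreover have "g0 \<otimes> a = a \<otimes> g0" using cent ab(1) by blast
  ultimately have "s \<otimes> st g0 = g0" using a g0 by simp
  then have "s \<otimes> (s \<otimes> st g0) = s \<otimes> g0" by simp
  then show ?thesis using commutator_square g0 by (simp add: m_assoc[symmetric])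
qed

lemma centralizer_outside_kernel_central:
  assumes g0: "g0 \<in> carrier G" "g0 \<notin> N" and cent: "\<forall>n\<in>N. g0 \<otimes> n = n \<otimes> g0"
    and g: "g \<in> carrier G"
  shows "g0 \<otimes> g = g \<otimes> g0"
proof (cases "g \<in> N")
  case True
  then show ?thesis using cent by blast
next
  case False
  define k where "k = inv g0 \<otimes> g"
  have "k \<in> N" using g0 g False by (simp add: k_def kernel_iff sigma_mult sigma_inv sigma_outside_kernel)
  then have comm: "g0 \<otimes> k = k \<otimes> g0" using cent by blast
  have g_eq: "g = g0 \<otimes> k" using g0 g by (simp add: k_def mult_inv_cancel_left)
  have "g0 \<otimes> g = g0 \<otimes> (k \<otimes> g0)" using g_eq comm by simp
  also have "\<dots> = g \<otimes> g0" using g0 g by (simp add: k_def m_assoc mult_inv_cancel_left)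
  finally show ?thesis .
qed

end

theorem lemma11:
  fixes G :: "('g, 'b) monoid_scheme" and st :: "'g \<Rightarrow> 'g" and \<sigma> :: "'g \<Rightarrow> int"
    and s :: 'g and F :: "'f::field itself"
  assumes inf: "infinite (UNIV :: 'f set)"
    and char: "(2::'f) \<noteq> 0"
    and grp: "group G"
    and nonab: "\<exists>g\<in>carrier G. \<exists>h\<in>carrier G. g \<otimes>\<^bsub>G\<^esub> h \<noteq> h \<otimes>\<^bsub>G\<^esub> g"
    and invol: "group_involution G st"
    and orient: "orientation G \<sigma>"
    and nontriv: "\<exists>g\<in>carrier G. \<sigma> g \<noteq> 1"
    and ggstar: "\<forall>g\<in>carrier G. g \<otimes>\<^bsub>G\<^esub> st g \<in> orient_kernel G \<sigma>"
    and normal: "gr_normal G st \<sigma> TYPE('f)"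
    and slc: "SLC_group G (orient_kernel G \<sigma>) st s"
  shows "\<exists>g0 \<in> carrier G - orient_kernel G \<sigma>.
           (\<forall>n\<in>orient_kernel G \<sigma>. g0 \<otimes>\<^bsub>G\<^esub> n = n \<otimes>\<^bsub>G\<^esub> g0) \<and>
           st g0 = s \<otimes>\<^bsub>G\<^esub> g0 \<and>
           (\<forall>g\<in>carrier G. g0 \<otimes>\<^bsub>G\<^esub> g = g \<otimes>\<^bsub>G\<^esub> g0)"
proof -
  interpret normal_slc_orientation G st \<sigma> s
    using ggstar
    by (intro normal_slc_orientation.intro normal_slc_orientation_axioms.intro grp invol orient slc
        gr_normal_star_commute[OF invol normal orient]
        gr_normal_pair_same_sign[OF char invol normal orient]
        gr_normal_pair_opposite_sign[OF char invol normal orient]) auto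
  obtain g0 where g0: "g0 \<in> carrier G" "g0 \<notin> orient_kernel G \<sigma>"
    and cent: "\<forall>n\<in>orient_kernel G \<sigma>. g0 \<otimes>\<^bsub>G\<^esub> n = n \<otimes>\<^bsub>G\<^esub> g0"
    using exists_centralizer_outside_kernel[OF nontriv] by blast
  show ?thesis
    using g0 cent star_of_centralizer[OF g0 cent] centralizer_outside_kernel_central[OF g0 cent]
    by blast
qed

end
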